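(* Let $(W,S)$ be a Coxeter system, $w\in W\setminus\{1\}$ and $k\in I$ with $k\notin D_R(w)$. If $D_R(ws_k)=\{k\}$, then $$\mathrm{Annex}(ws_k)=\mathrm{Annex}(w)\cdot W_{I\setminus\{k\}}=\{xy: x\in\mathrm{Annex}(w),\ y\in W_{I\setminus\{k\}}\}.$$
   Context: $(W,S)$ a Coxeter system with $S=\{s_i:i\in I\}$; $\ell$ the length; $\le$ the Bruhat order; $D_R(w)=\{i\in I:\ell(ws_i)<\ell(w)\}$ is the right descent set; $W_{J}=\langle s_i:i\in J\rangle$ for $J\subseteq I$. $\mathrm{Annex}(w)=\{y\in W: w\not\le y\}$. *)

theory Defs
  imports "HOL-Algebra.Algebra"
begin

text \<open>A Coxeter system is encoded as a group G together with a family of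
generators s indexed by a set I (so S = s ` I).  It is a Coxeter system iff
G is presented by the generators s i subject to the relations
(s i s j)^(m i j) = 1, where m i j is the order of s i s j in G
(m i j = 0 encodes infinite order, i.e. no relation).\<close>

definition word_eval :: "('a, 'b) monoid_scheme \<Rightarrow> ('i \<Rightarrow> 'a) \<Rightarrow> 'i list \<Rightarrow> 'a" where
  "word_eval G s ws = foldr (\<lambda>i x. s i \<otimes>\<^bsub>G\<^esub> x) ws \<one>\<^bsub>G\<^esub>"

definition cox_m :: "('a, 'b) monoid_scheme \<Rightarrow> ('i \<Rightarrow> 'a) \<Rightarrow> 'i \<Rightarrow> 'i \<Rightarrow> nat" where
  "cox_m G s i j = group.ord G (s i \<otimes>\<^bsub>G\<^esub> s j)"

fun alt_word :: "'i \<Rightarrow> 'i \<Rightarrow> nat \<Rightarrow> 'i list" where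
  "alt_word i j 0 = []"
| "alt_word i j (Suc n) = i # j # alt_word i j n"

inductive cox_equiv :: "('a, 'b) monoid_scheme \<Rightarrow> 'i set \<Rightarrow> ('i \<Rightarrow> 'a) \<Rightarrow> 'i list \<Rightarrow> 'i list \<Rightarrow> bool"
  for G I s where
  rel: "\<lbrakk>i \<in> I; j \<in> I; cox_m G s i j > 0\<rbrakk> \<Longrightarrow> cox_equiv G I s (alt_word i j (cox_m G s i j)) []"
| refl: "cox_equiv G I s u u"
| sym: "cox_equiv G I s u v \<Longrightarrow> cox_equiv G I s v u"
| trans: "cox_equiv G I s u v \<Longrightarrow> cox_equiv G I s v w \<Longrightarrow> cox_equiv G I s u w"
| cong: "cox_equiv G I s u v \<Longrightarrow> cox_equiv G I s (a @ u @ b) (a @ v @ b)"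

definition coxeter_system :: "('a, 'b) monoid_scheme \<Rightarrow> 'i set \<Rightarrow> ('i \<Rightarrow> 'a) \<Rightarrow> bool" where
  "coxeter_system G I s \<longleftrightarrow>
     group G \<and> s ` I \<subseteq> carrier G \<and> inj_on s I \<and>
     (\<forall>i\<in>I. s i \<noteq> \<one>\<^bsub>G\<^esub> \<and> s i \<otimes>\<^bsub>G\<^esub> s i = \<one>\<^bsub>G\<^esub>) \<and>
     carrier G = word_eval G s ` lists I \<and>
     (\<forall>ws\<in>lists I. word_eval G s ws = \<one>\<^bsub>G\<^esub> \<longrightarrow> cox_equiv G I s ws [])"

definition cox_length :: "('a, 'b) monoid_scheme \<Rightarrow> 'i set \<Rightarrow> ('i \<Rightarrow> 'a) \<Rightarrow> 'a \<Rightarrow> nat" where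
  "cox_length G I s w = (LEAST n. \<exists>ws\<in>lists I. length ws = n \<and> word_eval G s ws = w)"

definition reflections :: "('a, 'b) monoid_scheme \<Rightarrow> 'i set \<Rightarrow> ('i \<Rightarrow> 'a) \<Rightarrow> 'a set" where
  "reflections G I s = {g \<otimes>\<^bsub>G\<^esub> s i \<otimes>\<^bsub>G\<^esub> inv\<^bsub>G\<^esub> g | g i. g \<in> carrier G \<and> i \<in> I}"

definition bruhat_step :: "('a, 'b) monoid_scheme \<Rightarrow> 'i set \<Rightarrow> ('i \<Rightarrow> 'a) \<Rightarrow> 'a \<Rightarrow> 'a \<Rightarrow> bool" where
  "bruhat_step G I s u v \<longleftrightarrow> u \<in> carrier G \<and>
     (\<exists>t\<in>reflections G I s. v = u \<otimes>\<^bsub>G\<^esub> t \<and> cox_length G I s u < cox_length G I s v)"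

definition bruhat_le :: "('a, 'b) monoid_scheme \<Rightarrow> 'i set \<Rightarrow> ('i \<Rightarrow> 'a) \<Rightarrow> 'a \<Rightarrow> 'a \<Rightarrow> bool" where
  "bruhat_le G I s u v \<longleftrightarrow> u \<in> carrier G \<and> v \<in> carrier G \<and> (bruhat_step G I s)\<^sup>*\<^sup>* u v"

definition right_descent :: "('a, 'b) monoid_scheme \<Rightarrow> 'i set \<Rightarrow> ('i \<Rightarrow> 'a) \<Rightarrow> 'a \<Rightarrow> 'i set" where
  "right_descent G I s w = {i \<in> I. cox_length G I s (w \<otimes>\<^bsub>G\<^esub> s i) < cox_length G I s w}"

definition parabolic :: "('a, 'b) monoid_scheme \<Rightarrow> ('i \<Rightarrow> 'a) \<Rightarrow> 'i set \<Rightarrow> 'a set" where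
  "parabolic G s J = generate G (s ` J)"

definition annex :: "('a, 'b) monoid_scheme \<Rightarrow> 'i set \<Rightarrow> ('i \<Rightarrow> 'a) \<Rightarrow> 'a \<Rightarrow> 'a set" where
  "annex G I s w = {y \<in> carrier G. \<not> bruhat_le G I s w y}"

end

theory Submission
  imports Defs
begin

text \<open>Let \<open>v = w s\<^sub>k\<close> and \<open>J = I - {k}\<close>. No \<open>j \<in> J\<close> is a right descent of \<open>v\<close>,
so the lifting property of the Bruhat order gives \<open>v \<le> y \<longleftrightarrow> v \<le> y s\<^sub>j\<close> for
\<open>j \<in> J\<close>: the up-set of \<open>v\<close>, and with it \<open>Annex(v)\<close>, is a union of cosets \<open>y W\<^sub>J\<close>.
Each coset contains an element \<open>x\<close> without right descents in \<open>J\<close>. If \<open>w \<le> x\<close> then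
\<open>x \<noteq> 1\<close>, so \<open>x\<close> has a right descent, necessarily \<open>k\<close>, and lifting gives \<open>v \<le> x\<close>.
Hence \<open>y W\<^sub>J\<close> lies in \<open>Annex(v)\<close> iff \<open>x \<in> Annex(w)\<close>; together with \<open>w \<le> v\<close> this
yields \<open>Annex(v) = Annex(w) W\<^sub>J\<close>.

The lifting property rests on the strong exchange condition, which is derived from the
presentation: the parity of the number of times a reflection occurs among the reflections of a
word depends only on the group element the word represents.\<close>

locale coxeter = group +
  fixes I :: "'i set" and s :: "'i \<Rightarrow> 'a"
  assumes coxeter_system: "coxeter_system G I s"
begin

abbreviation ev :: "'i list \<Rightarrow> 'a" where "ev \<equiv> word_eval G s"
abbreviation len :: "'a \<Rightarrow> nat" where "len \<equiv> cox_length G I s"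
abbreviation T :: "'a set" where "T \<equiv> reflections G I s"
abbreviation D :: "'a \<Rightarrow> 'i set" where "D \<equiv> right_descent G I s"
abbreviation bstep :: "'a \<Rightarrow> 'a \<Rightarrow> bool" where "bstep \<equiv> bruhat_step G I s"
abbreviation bruhat :: "'a \<Rightarrow> 'a \<Rightarrow> bool" (infix "\<preceq>" 50) where "u \<preceq> v \<equiv> bruhat_le G I s u v"

lemma gen_closed [simp]: "i \<in> I \<Longrightarrow> s i \<in> carrier G"
  using coxeter_system unfolding coxeter_system_def by auto

lemma gen_square [simp]: "i \<in> I \<Longrightarrow> s i \<otimes> s i = \<one>"
  using coxeter_system unfolding coxeter_system_def by auto

lemma gen_inv [simp]: "i \<in> I \<Longrightarrow> inv (s i) = s i"
  by (simp add: inv_equality)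

lemma cox_equiv_Nil_if_word_eval_one:
  "ws \<in> lists I \<Longrightarrow> ev ws = \<one> \<Longrightarrow> cox_equiv G I s ws []"
  using coxeter_system unfolding coxeter_system_def by auto

lemma inv_mult_cancel_left [simp]: "g \<in> carrier G \<Longrightarrow> x \<in> carrier G \<Longrightarrow> inv g \<otimes> (g \<otimes> x) = x"
  by (simp add: m_assoc[symmetric])

lemma mult_inv_cancel_left [simp]: "g \<in> carrier G \<Longrightarrow> x \<in> carrier G \<Longrightarrow> g \<otimes> (inv g \<otimes> x) = x"
  by (simp add: m_assoc[symmetric])

lemma gen_mult_cancel_left [simp]: "i \<in> I \<Longrightarrow> x \<in> carrier G \<Longrightarrow> s i \<otimes> (s i \<otimes> x) = x"
  by (simp add: m_assoc[symmetric])

lemma mult_gen_cancel_right [simp]: "i \<in> I \<Longrightarrow> x \<in> carrier G \<Longrightarrow> x \<otimes> s i \<otimes> s i = x"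
  by (simp add: m_assoc)

lemma word_eval_Nil [simp]: "ev [] = \<one>"
  by (simp add: word_eval_def)

lemma word_eval_Cons [simp]: "ev (i # u) = s i \<otimes> ev u"
  by (simp add: word_eval_def)

lemma word_eval_closed [simp]: "u \<in> lists I \<Longrightarrow> ev u \<in> carrier G"
  by (induction u) auto

lemma word_eval_append: "u \<in> lists I \<Longrightarrow> v \<in> lists I \<Longrightarrow> ev (u @ v) = ev u \<otimes> ev v"
  by (induction u) (auto simp: m_assoc)

lemma word_eval_rev: "u \<in> lists I \<Longrightarrow> ev (rev u) = inv (ev u)"
  by (induction u) (auto simp: word_eval_append inv_mult_group in_lists_conv_set)

lemma wordE:
  assumes "w \<in> carrier G"
  obtains u where "u \<in> lists I" "ev u = w"
  using assms coxeter_system unfolding coxeter_system_def by auto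

subsection \<open>Reflection counts of words\<close>

text \<open>The parity of \<open>refl_count u t\<close> is the reflection cocycle \<open>\<eta>(ev u, t)\<close>.\<close>

fun refl_count :: "'i list \<Rightarrow> 'a \<Rightarrow> nat" where
  "refl_count [] t = 0"
| "refl_count (i # u) t = refl_count u t + (if t = inv (ev u) \<otimes> s i \<otimes> ev u then 1 else 0)"

lemma conj_eq_iff:
  assumes "g \<in> carrier G" "t \<in> carrier G" "a \<in> carrier G"
  shows "t = inv g \<otimes> a \<otimes> g \<longleftrightarrow> g \<otimes> t \<otimes> inv g = a"
  using assms by (metis inv_closed inv_solve_left inv_solve_right m_assoc m_closed)

lemma refl_count_append:
  assumes "u \<in> lists I" "v \<in> lists I" "t \<in> carrier G"
  shows "refl_count (u @ v) t = refl_count v t + refl_count u (ev v \<otimes> t \<otimes> inv (ev v))"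
  using assms(1)
proof (induction u)
  case Nil
  then show ?case by simp
next
  case (Cons i u)
  then have carr: "ev v \<in> carrier G" "ev u \<in> carrier G" "i \<in> I"
    using assms by auto
  have "inv (ev (u @ v)) \<otimes> s i \<otimes> ev (u @ v) = inv (ev v) \<otimes> (inv (ev u) \<otimes> s i \<otimes> ev u) \<otimes> ev v"
    using carr Cons assms by (simp add: word_eval_append inv_mult_group m_assoc)
  then have "t = inv (ev (u @ v)) \<otimes> s i \<otimes> ev (u @ v) \<longleftrightarrow>
             ev v \<otimes> t \<otimes> inv (ev v) = inv (ev u) \<otimes> s i \<otimes> ev u"
    using conj_eq_iff[of "ev v" t "inv (ev u) \<otimes> s i \<otimes> ev u"] carr assms by simp
  then show ?case
    using Cons by simp
qed

definition parity_equiv :: "'i list \<Rightarrow> 'i list \<Rightarrow> bool" where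
  "parity_equiv u v \<longleftrightarrow> ev u = ev v \<and> (even (length u) \<longleftrightarrow> even (length v)) \<and>
     (\<forall>t\<in>carrier G. even (refl_count u t) \<longleftrightarrow> even (refl_count v t))"

lemma parity_equiv_refl: "parity_equiv u u"
  by (simp add: parity_equiv_def)

lemma parity_equiv_sym: "parity_equiv u v \<Longrightarrow> parity_equiv v u"
  by (simp add: parity_equiv_def)

lemma parity_equiv_trans: "parity_equiv u v \<Longrightarrow> parity_equiv v w \<Longrightarrow> parity_equiv u w"
  by (simp add: parity_equiv_def)

lemma parity_equiv_cong:
  assumes lists: "a \<in> lists I" "u \<in> lists I" "v \<in> lists I" "b \<in> lists I"
    and uv: "parity_equiv u v"
  shows "parity_equiv (a @ u @ b) (a @ v @ b)"
proof -
  have ev_eq: "ev (u @ b) = ev (v @ b)"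
    using uv lists by (simp add: parity_equiv_def word_eval_append)
  have "even (refl_count (a @ u @ b) t) \<longleftrightarrow> even (refl_count (a @ v @ b) t)"
    if t: "t \<in> carrier G" for t
  proof -
    let ?t' = "ev b \<otimes> t \<otimes> inv (ev b)"
    have "even (refl_count u ?t') \<longleftrightarrow> even (refl_count v ?t')"
      using uv t lists by (simp add: parity_equiv_def)
    then show ?thesis
      using lists t ev_eq by (simp add: refl_count_append)
  qed
  then show ?thesis
    using uv lists by (simp add: parity_equiv_def word_eval_append)
qed

context
  fixes i j assumes ij: "i \<in> I" "j \<in> I"
begin

lemma word_eval_alt_word: "ev (alt_word i j n) = (s i \<otimes> s j) [^] n"
proof (induction n)
  case 0
  then show ?case by simp
next
  case (Suc n)
  have "(s i \<otimes> s j) [^] Suc n = (s i \<otimes> s j) \<otimes> (s i \<otimes> s j) [^] n"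
    using ij by (intro nat_pow_Suc2) simp
  then show ?case
    using Suc ij by (simp add: m_assoc)
qed

lemma gen_mult_pow: "s j \<otimes> (s i \<otimes> s j) [^] (n::nat) = (s j \<otimes> s i) [^] n \<otimes> s j"
proof (induction n)
  case 0
  then show ?case using ij by simp
next
  case (Suc n)
  have "s j \<otimes> (s i \<otimes> s j) [^] Suc n = (s j \<otimes> (s i \<otimes> s j) [^] n) \<otimes> (s i \<otimes> s j)"
    using ij by (simp add: m_assoc)
  also have "\<dots> = (s j \<otimes> s i) [^] n \<otimes> (s j \<otimes> s i) \<otimes> s j"
    using Suc ij by (simp add: m_assoc)
  finally show ?case by simp
qed

lemma inv_pow_gen_pair: "inv ((s i \<otimes> s j) [^] (n::nat)) = (s j \<otimes> s i) [^] n"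
proof -
  have "inv (s i \<otimes> s j) = s j \<otimes> s i"
    using ij by (simp add: inv_mult_group)
  then show ?thesis
    using ij nat_pow_inv[of "s i \<otimes> s j" n] by simp
qed

lemma dihedral_reflection_even:
  "inv ((s i \<otimes> s j) [^] (n::nat)) \<otimes> s j \<otimes> (s i \<otimes> s j) [^] n = (s j \<otimes> s i) [^] (2*n) \<otimes> s j"
proof -
  have "inv ((s i \<otimes> s j) [^] n) \<otimes> s j \<otimes> (s i \<otimes> s j) [^] n
      = (s j \<otimes> s i) [^] n \<otimes> (s j \<otimes> (s i \<otimes> s j) [^] n)"
    using ij by (simp add: inv_pow_gen_pair m_assoc)
  also have "\<dots> = ((s j \<otimes> s i) [^] n \<otimes> (s j \<otimes> s i) [^] n) \<otimes> s j"
    using ij by (simp add: gen_mult_pow m_assoc)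
  also have "\<dots> = (s j \<otimes> s i) [^] (2*n) \<otimes> s j"
    using ij by (simp add: nat_pow_mult mult_2)
  finally show ?thesis .
qed

lemma dihedral_reflection_odd:
  "inv (s j \<otimes> (s i \<otimes> s j) [^] (n::nat)) \<otimes> s i \<otimes> (s j \<otimes> (s i \<otimes> s j) [^] n)
     = (s j \<otimes> s i) [^] (Suc (2*n)) \<otimes> s j"
proof -
  have "inv (s j \<otimes> (s i \<otimes> s j) [^] n) = (s j \<otimes> s i) [^] n \<otimes> s j"
    using ij by (simp add: inv_mult_group inv_pow_gen_pair)
  then have "inv (s j \<otimes> (s i \<otimes> s j) [^] n) \<otimes> s i \<otimes> (s j \<otimes> (s i \<otimes> s j) [^] n)
      = (s j \<otimes> s i) [^] n \<otimes> (s j \<otimes> s i) \<otimes> ((s j \<otimes> s i) [^] n \<otimes> s j)"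
    using ij by (simp add: gen_mult_pow m_assoc)
  also have "\<dots> = ((s j \<otimes> s i) [^] Suc n \<otimes> (s j \<otimes> s i) [^] n) \<otimes> s j"
    using ij by (simp add: m_assoc)
  also have "\<dots> = (s j \<otimes> s i) [^] (Suc n + n) \<otimes> s j"
    by (metis ij gen_closed m_closed nat_pow_mult)
  finally show ?thesis
    by (simp add: mult_2)
qed

lemma refl_count_alt_word:
  "refl_count (alt_word i j n) t = (\<Sum>p<2*n. if t = (s j \<otimes> s i) [^] p \<otimes> s j then 1 else 0)"
proof (induction n)
  case 0
  then show ?case by simp
next
  case (Suc n)
  have "2 * Suc n = Suc (Suc (2*n))" by simp
  then show ?case
    using Suc by (simp add: word_eval_alt_word dihedral_reflection_even dihedral_reflection_odd
        del: mult_Suc_right)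
qed

text \<open>The reflections of \<open>alt_word i j m\<close> are periodic with period \<open>m\<close> in the position
when \<open>(s i s j)\<^sup>m = 1\<close>, so each occurs an even number of times.\<close>

lemma even_refl_count_alt_word:
  assumes "(s i \<otimes> s j) [^] (m::nat) = \<one>"
  shows "even (refl_count (alt_word i j m) t)"
proof -
  define f where "f p = (if t = (s j \<otimes> s i) [^] (p::nat) \<otimes> s j then 1 else (0::nat))" for p
  have "(s j \<otimes> s i) [^] m = \<one>"
    using assms inv_pow_gen_pair[of m] by simp
  then have periodic: "f (m + p) = f p" for p
    using ij by (simp add: f_def nat_pow_mult[symmetric])
  have split: "(\<Sum>p<m+n. f p) = (\<Sum>p<m. f p) + (\<Sum>p<n. f (m + p))" for n
    by (induction n) (auto simp: add.assoc)
  have "refl_count (alt_word i j m) t = (\<Sum>p<m+m. f p)"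
    by (simp add: refl_count_alt_word f_def mult_2)
  also have "\<dots> = 2 * (\<Sum>p<m. f p)"
    by (simp add: split periodic)
  finally show ?thesis by simp
qed

lemma alt_word_in_lists: "alt_word i j n \<in> lists I"
  by (induction n) (auto simp: ij)

lemma parity_equiv_relation: "parity_equiv (alt_word i j (cox_m G s i j)) []"
proof -
  have "(s i \<otimes> s j) [^] (cox_m G s i j) = \<one>"
    using ij by (simp add: cox_m_def)
  moreover have "length (alt_word i j n) = 2 * n" for n
    by (induction n) auto
  ultimately show ?thesis
    using even_refl_count_alt_word unfolding parity_equiv_def by (simp add: word_eval_alt_word)
qed

end

text \<open>The congruence \<open>cox_equiv\<close> may insert letters outside \<open>I\<close>; filtering them out
makes the words amenable to \<open>parity_equiv_cong\<close>.\<close>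

lemma parity_equiv_if_cox_equiv:
  "cox_equiv G I s u v \<Longrightarrow> parity_equiv (filter (\<lambda>x. x \<in> I) u) (filter (\<lambda>x. x \<in> I) v)"
proof (induction rule: cox_equiv.induct)
  case (rel i j)
  then have "filter (\<lambda>x. x \<in> I) (alt_word i j n) = alt_word i j n" for n
    by (metis alt_word_in_lists filter_id_conv in_listsD)
  with rel show ?case
    using parity_equiv_relation by simp
next
  case (refl u)
  show ?case by (rule parity_equiv_refl)
next
  case (sym u v)
  then show ?case by (blast intro: parity_equiv_sym)
next
  case (trans u v w)
  then show ?case by (blast intro: parity_equiv_trans)
next
  case (cong u v a b)
  have "filter (\<lambda>x. x \<in> I) xs \<in> lists I" for xs
    by auto
  then show ?case
    using cong parity_equiv_cong[of "filter (\<lambda>x. x \<in> I) a" _ _ "filter (\<lambda>x. x \<in> I) b"]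
    by simp
qed

lemma parity_equiv_Nil_if_word_eval_one:
  "u \<in> lists I \<Longrightarrow> ev u = \<one> \<Longrightarrow> parity_equiv u []"
  using parity_equiv_if_cox_equiv cox_equiv_Nil_if_word_eval_one
  by (metis filter_True filter.simps(1) in_listsD)

theorem parity_equiv_if_word_eval_eq:
  assumes u: "u \<in> lists I" and v: "v \<in> lists I" and eq: "ev u = ev v"
  shows "parity_equiv u v"
proof -
  have rv: "rev v \<in> lists I"
    using v by (auto simp: in_lists_conv_set)
  have "parity_equiv (rev v @ u) []"
    using u v rv eq by (intro parity_equiv_Nil_if_word_eval_one) (auto simp: word_eval_append word_eval_rev)
  then have "parity_equiv (v @ (rev v @ u) @ []) (v @ [] @ [])"
    using u v rv by (intro parity_equiv_cong) auto
  moreover have "parity_equiv (v @ rev v) []"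
    using v rv by (intro parity_equiv_Nil_if_word_eval_one) (auto simp: word_eval_append word_eval_rev)
  then have "parity_equiv ([] @ (v @ rev v) @ u) ([] @ [] @ u)"
    using u v rv by (intro parity_equiv_cong) auto
  ultimately show ?thesis
    by (auto intro: parity_equiv_trans parity_equiv_sym)
qed

lemma cox_length_le: "u \<in> lists I \<Longrightarrow> len (ev u) \<le> length u"
  unfolding cox_length_def by (rule Least_le) auto

lemma reduced_wordE:
  assumes "w \<in> carrier G"
  obtains u where "u \<in> lists I" "length u = len w" "ev u = w"
proof -
  have "\<exists>n. \<exists>ws\<in>lists I. length ws = n \<and> ev ws = w"
    using assms wordE by metis
  from LeastI_ex[OF this] show ?thesis
    using that unfolding cox_length_def by blast
qed

lemma cox_length_one [simp]: "len \<one> = 0"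
  using cox_length_le[of "[]"] by simp

lemma cox_length_mult_gen:
  assumes w: "w \<in> carrier G" and i: "i \<in> I"
  shows "len (w \<otimes> s i) = len w + 1 \<or> len w = len (w \<otimes> s i) + 1"
proof -
  obtain u where u: "u \<in> lists I" "length u = len w" "ev u = w"
    using w by (rule reduced_wordE)
  obtain v where v: "v \<in> lists I" "length v = len (w \<otimes> s i)" "ev v = w \<otimes> s i"
    using reduced_wordE[of "w \<otimes> s i"] w i by auto
  have ui: "ev (u @ [i]) = w \<otimes> s i"
    using u i by (simp add: word_eval_append)
  have vi: "ev (v @ [i]) = w"
    using v i w by (simp add: word_eval_append)
  have "len (w \<otimes> s i) \<le> len w + 1"
    using cox_length_le[of "u @ [i]"] ui u i by simp
  moreover have "len w \<le> len (w \<otimes> s i) + 1"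
    using cox_length_le[of "v @ [i]"] vi v i by simp
  moreover have "even (length (u @ [i])) \<longleftrightarrow> even (length v)"
    using parity_equiv_if_word_eval_eq[of "u @ [i]" v] u v i ui by (simp add: parity_equiv_def)
  then have "len w \<noteq> len (w \<otimes> s i)"
    using u v by auto
  ultimately show ?thesis
    by linarith
qed

lemma right_descent_iff: "i \<in> D w \<longleftrightarrow> i \<in> I \<and> len (w \<otimes> s i) < len w"
  by (simp add: right_descent_def)

lemma cox_length_mult_descent:
  "w \<in> carrier G \<Longrightarrow> i \<in> D w \<Longrightarrow> len (w \<otimes> s i) + 1 = len w"
  using cox_length_mult_gen[of w i] right_descent_iff[of i w] by auto

lemma cox_length_mult_non_descent:
  "w \<in> carrier G \<Longrightarrow> i \<in> I \<Longrightarrow> i \<notin> D w \<Longrightarrow> len (w \<otimes> s i) = len w + 1"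
  using cox_length_mult_gen[of w i] right_descent_iff[of i w] by auto

lemma right_descent_nonempty:
  assumes x: "x \<in> carrier G" "x \<noteq> \<one>"
  shows "D x \<noteq> {}"
proof -
  obtain r where r: "r \<in> lists I" "length r = len x" "ev r = x"
    using x(1) by (rule reduced_wordE)
  with x have "r \<noteq> []" by auto
  then obtain r' i where ri: "r = r' @ [i]"
    by (metis rev_exhaust)
  with r have i: "i \<in> I" "r' \<in> lists I" by auto
  with r ri have "x = ev r' \<otimes> s i"
    by (simp add: word_eval_append)
  with i have "x \<otimes> s i = ev r'"
    by simp
  then have "len (x \<otimes> s i) < len x"
    using cox_length_le[OF i(2)] r ri by simp
  then show ?thesis
    using i right_descent_iff by blast
qed

subsection \<open>Reflections and the strong exchange condition\<close>

lemma reflection_closed: "t \<in> T \<Longrightarrow> t \<in> carrier G"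
  unfolding reflections_def by auto

lemma reflection_square: "t \<in> T \<Longrightarrow> t \<otimes> t = \<one>"
proof -
  assume "t \<in> T"
  then obtain g i where g: "g \<in> carrier G" "i \<in> I" "t = g \<otimes> s i \<otimes> inv g"
    unfolding reflections_def by auto
  then have "t \<otimes> t = g \<otimes> (s i \<otimes> s i) \<otimes> inv g"
    by (simp add: m_assoc)
  with g show ?thesis by simp
qed

lemma gen_in_reflections: "i \<in> I \<Longrightarrow> s i \<in> T"
  unfolding reflections_def by force

lemma reflection_conj: "g \<in> carrier G \<Longrightarrow> t \<in> T \<Longrightarrow> g \<otimes> t \<otimes> inv g \<in> T"
proof -
  assume g: "g \<in> carrier G" and "t \<in> T"
  then obtain h i where h: "h \<in> carrier G" "i \<in> I" "t = h \<otimes> s i \<otimes> inv h"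
    unfolding reflections_def by auto
  with g have "g \<otimes> t \<otimes> inv g = (g \<otimes> h) \<otimes> s i \<otimes> inv (g \<otimes> h)"
    by (simp add: m_assoc inv_mult_group)
  with g h show ?thesis
    unfolding reflections_def by blast
qed

definition word_reflection :: "'i list \<Rightarrow> nat \<Rightarrow> 'a" where
  "word_reflection u p = inv (ev (drop (Suc p) u)) \<otimes> s (u ! p) \<otimes> ev (drop (Suc p) u)"

definition delete_at :: "nat \<Rightarrow> 'i list \<Rightarrow> 'i list" where
  "delete_at p u = take p u @ drop (Suc p) u"

lemma delete_at_in_lists: "u \<in> lists I \<Longrightarrow> delete_at p u \<in> lists I"
  by (auto simp: delete_at_def in_lists_conv_set dest: in_set_takeD in_set_dropD)

lemma length_delete_at: "p < length u \<Longrightarrow> length (delete_at p u) = length u - 1"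
  by (simp add: delete_at_def)

lemma word_reflection_in_reflections:
  assumes "u \<in> lists I" "p < length u"
  shows "word_reflection u p \<in> T"
proof -
  let ?g = "inv (ev (drop (Suc p) u))"
  have "drop (Suc p) u \<in> lists I" "u ! p \<in> I"
    using assms by (auto simp: in_lists_conv_set dest: in_set_dropD)
  then have "?g \<in> carrier G" "inv ?g = ev (drop (Suc p) u)" "u ! p \<in> I"
    by simp_all
  then show ?thesis
    unfolding word_reflection_def reflections_def by force
qed

lemma word_reflection_if_refl_count_pos:
  "u \<in> lists I \<Longrightarrow> 0 < refl_count u t \<Longrightarrow> \<exists>p<length u. t = word_reflection u p"
proof (induction u)
  case Nil
  then show ?case by simp
next
  case (Cons i u)
  show ?case
  proof (cases "t = inv (ev u) \<otimes> s i \<otimes> ev u")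
    case True
    then show ?thesis
      by (intro exI[of _ 0]) (simp add: word_reflection_def)
  next
    case False
    with Cons obtain p where "p < length u" "t = word_reflection u p"
      by auto
    then show ?thesis
      by (intro exI[of _ "Suc p"]) (simp add: word_reflection_def)
  qed
qed

lemma word_eval_delete_at:
  assumes "u \<in> lists I" "p < length u"
  shows "ev u = ev (delete_at p u) \<otimes> word_reflection u p"
proof -
  have u: "u = take p u @ [u ! p] @ drop (Suc p) u"
    using assms id_take_nth_drop by simp
  have lists: "take p u \<in> lists I" "drop (Suc p) u \<in> lists I" "u ! p \<in> I"
    using assms by (auto simp: in_lists_conv_set dest: in_set_takeD in_set_dropD)
  have "ev u = ev (take p u) \<otimes> s (u ! p) \<otimes> ev (drop (Suc p) u)"
    by (subst u) (simp add: word_eval_append lists m_assoc)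
  moreover have "ev (delete_at p u) \<otimes> word_reflection u p
      = ev (take p u) \<otimes> s (u ! p) \<otimes> ev (drop (Suc p) u)"
    unfolding delete_at_def word_reflection_def
    using lists by (simp add: word_eval_append m_assoc)
  ultimately show ?thesis by simp
qed

text \<open>For \<open>t = g s\<^sub>i g\<inverse>\<close> and a word \<open>x\<close> for \<open>g\<close>, the middle letter of
\<open>x i x\<inverse>\<close> contributes \<open>t\<close> once, the others contribute as in \<open>x x\<inverse>\<close>, i.e. evenly.\<close>

lemma odd_refl_count_of_reflection:
  assumes t: "t \<in> T" and r: "r \<in> lists I" "ev r = t"
  shows "odd (refl_count r t)"
proof -
  obtain g i where g: "g \<in> carrier G" "i \<in> I" "t = g \<otimes> s i \<otimes> inv g"
    using t unfolding reflections_def by auto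
  obtain x where x: "x \<in> lists I" "ev x = g"
    using g(1) by (rule wordE)
  have rx: "rev x \<in> lists I"
    using x by (auto simp: in_lists_conv_set)
  have tc: "t \<in> carrier G"
    using g by simp
  have conj_g: "inv g \<otimes> t \<otimes> inv (inv g) = s i"
    using g by (simp add: m_assoc)
  have conj_sg: "(s i \<otimes> inv g) \<otimes> t \<otimes> inv (s i \<otimes> inv g) = s i"
    using g by (simp add: m_assoc inv_mult_group)
  have "refl_count (x @ [i] @ rev x) t = refl_count (rev x) t + 1 + refl_count x (s i)"
    using refl_count_append[of x "[i] @ rev x" t] refl_count_append[of "[i]" "rev x" t]
      x rx g tc conj_g conj_sg by (simp add: word_eval_rev m_assoc)
  moreover have "even (refl_count (x @ rev x) t)"
    using parity_equiv_Nil_if_word_eval_one[of "x @ rev x"] x rx g tc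
    by (simp add: word_eval_append word_eval_rev parity_equiv_def)
  then have "even (refl_count (rev x) t + refl_count x (s i))"
    using refl_count_append[of x "rev x" t] x rx tc conj_g by (simp add: word_eval_rev)
  moreover have "parity_equiv r (x @ [i] @ rev x)"
    using r x rx g by (intro parity_equiv_if_word_eval_eq) (auto simp: word_eval_append word_eval_rev m_assoc)
  ultimately show ?thesis
    using tc unfolding parity_equiv_def by auto
qed

text \<open>If \<open>t\<close> occurred an even number of times among the reflections of \<open>r\<close>, it would occur
an odd number of times among those of a reduced word for \<open>w t\<close>; deleting the corresponding
letter would then express \<open>w\<close> by a word shorter than \<open>len w\<close>.\<close>

theorem strong_exchange:
  assumes w: "w \<in> carrier G" and t: "t \<in> T" and shorter: "len (w \<otimes> t) < len w"
    and r: "r \<in> lists I" "ev r = w"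
  shows "\<exists>p<length r. w \<otimes> t = ev (delete_at p r)"
proof -
  have tc: "t \<in> carrier G"
    using t reflection_closed by auto
  have "odd (refl_count r t)"
  proof (rule ccontr)
    assume even_r: "\<not> odd (refl_count r t)"
    obtain r' where r': "r' \<in> lists I" "length r' = len (w \<otimes> t)" "ev r' = w \<otimes> t"
      using reduced_wordE[of "w \<otimes> t"] w tc by auto
    obtain rt where rt: "rt \<in> lists I" "ev rt = t"
      using tc by (rule wordE)
    have "t \<otimes> t \<otimes> inv t = t"
      using tc by (simp add: m_assoc)
    moreover have "ev (r' @ rt) = w"
      using t tc w r' rt reflection_square by (simp add: word_eval_append m_assoc)
    ultimately have "refl_count (r' @ rt) t = refl_count rt t + refl_count r' t"
         "parity_equiv (r' @ rt) r"
      using refl_count_append r' rt r tc parity_equiv_if_word_eval_eq by auto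
    then have "odd (refl_count r' t)"
      using odd_refl_count_of_reflection[OF t rt] even_r tc unfolding parity_equiv_def by auto
    then obtain p where p: "p < length r'" "t = word_reflection r' p"
      using word_reflection_if_refl_count_pos r' by (metis odd_pos)
    then have "w \<otimes> t = ev (delete_at p r') \<otimes> t"
      using word_eval_delete_at r' by simp
    then have "w = ev (delete_at p r')"
      using w tc delete_at_in_lists r' by (metis word_eval_closed right_cancel)
    then have "len w \<le> length r' - 1"
      using cox_length_le[OF delete_at_in_lists[OF r'(1)], of p] length_delete_at[OF p(1)] by simp
    with shorter r' show False
      by linarith
  qed
  then obtain p where p: "p < length r" "t = word_reflection r p"
    using word_reflection_if_refl_count_pos r by (metis odd_pos)
  then have "w \<otimes> t = ev (delete_at p r) \<otimes> (t \<otimes> t)"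
    using word_eval_delete_at[OF r(1) p(1)] r delete_at_in_lists tc by (simp add: m_assoc)
  with p t reflection_square delete_at_in_lists r show ?thesis
    by auto
qed

subsection \<open>The lifting property of the Bruhat order\<close>

lemma bstep_intro: "u \<in> carrier G \<Longrightarrow> t \<in> T \<Longrightarrow> len u < len (u \<otimes> t) \<Longrightarrow> bstep u (u \<otimes> t)"
  unfolding bruhat_step_def by auto

lemma bstep_closed: "bstep u v \<Longrightarrow> u \<in> carrier G \<and> v \<in> carrier G"
  unfolding bruhat_step_def using reflection_closed by auto

lemma bruhat_le_iff: "u \<preceq> v \<longleftrightarrow> u \<in> carrier G \<and> bstep\<^sup>*\<^sup>* u v"
proof -
  have "bstep\<^sup>*\<^sup>* u v \<Longrightarrow> u \<in> carrier G \<Longrightarrow> v \<in> carrier G"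
    by (induction rule: rtranclp_induct) (auto dest: bstep_closed)
  then show ?thesis
    unfolding bruhat_le_def by blast
qed

lemma bruhat_le_trans: "u \<preceq> v \<Longrightarrow> v \<preceq> w \<Longrightarrow> u \<preceq> w"
  unfolding bruhat_le_iff by auto

lemma bruhat_le_if_bstep: "bstep u v \<Longrightarrow> u \<preceq> v"
  unfolding bruhat_le_iff using bstep_closed by auto

lemma bruhat_le_mult_non_descent:
  "u \<in> carrier G \<Longrightarrow> i \<in> I \<Longrightarrow> i \<notin> D u \<Longrightarrow> u \<preceq> u \<otimes> s i"
  using bstep_intro[OF _ gen_in_reflections] cox_length_mult_non_descent bruhat_le_if_bstep
  by simp

lemma bruhat_le_one:
  assumes "w \<preceq> \<one>"
  shows "w = \<one>"
proof -
  have "bstep\<^sup>*\<^sup>* u v \<Longrightarrow> u = v \<or> len u < len v" for u v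
    by (induction rule: rtranclp_induct) (auto simp: bruhat_step_def)
  with assms show ?thesis
    unfolding bruhat_le_iff by fastforce
qed

text \<open>The new step is by the reflection \<open>s\<^sub>i t s\<^sub>i\<close>.\<close>

lemma bstep_mult_gen:
  assumes "bstep u x" "i \<in> I" "len (u \<otimes> s i) < len (x \<otimes> s i)"
  shows "bstep (u \<otimes> s i) (x \<otimes> s i)"
proof -
  obtain t where t: "t \<in> T" "x = u \<otimes> t" and u: "u \<in> carrier G"
    using assms(1) unfolding bruhat_step_def by auto
  then have "x \<otimes> s i = (u \<otimes> s i) \<otimes> (s i \<otimes> t \<otimes> inv (s i))"
    using assms(2) reflection_closed by (simp add: m_assoc)
  then show ?thesis
    using bstep_intro[of "u \<otimes> s i"] reflection_conj[of "s i" t] t u assms by simp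
qed

lemma bstep_descent_lift:
  assumes st: "bstep a b" and i: "i \<in> D b" "i \<notin> D a"
  shows "a = b \<otimes> s i \<or> bstep (a \<otimes> s i) (b \<otimes> s i)"
proof -
  obtain t where t: "t \<in> T" "b = a \<otimes> t" and a: "a \<in> carrier G"
    using st unfolding bruhat_step_def by auto
  have iI: "i \<in> I" using i right_descent_iff by auto
  have tc: "t \<in> carrier G" using t reflection_closed by auto
  have b: "b \<in> carrier G" using a tc t by simp
  have ab: "a = b \<otimes> t" using t a tc reflection_square by (simp add: m_assoc)
  obtain r where r: "r \<in> lists I" "length r = len (b \<otimes> s i)" "ev r = b \<otimes> s i"
    using reduced_wordE[of "b \<otimes> s i"] b iI by auto
  have ri: "r @ [i] \<in> lists I" "ev (r @ [i]) = b"
    using r iI b by (auto simp: word_eval_append)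
  have "len (b \<otimes> t) < len b"
    using ab st by (simp add: bruhat_step_def)
  then obtain p where p: "p < length (r @ [i])" "a = ev (delete_at p (r @ [i]))"
    using strong_exchange[OF b t(1) _ ri] ab by auto
  show ?thesis
  proof (cases "p = length r")
    case True
    then show ?thesis
      using p r by (simp add: delete_at_def)
  next
    case False
    then have pr: "p < length r" using p by simp
    then have "delete_at p (r @ [i]) = delete_at p r @ [i]"
      by (simp add: delete_at_def)
    with p have "a = ev (delete_at p r) \<otimes> s i"
      using delete_at_in_lists[OF r(1)] iI by (simp add: word_eval_append)
    then have "a \<otimes> s i = ev (delete_at p r)"
      using delete_at_in_lists[OF r(1)] iI by (simp add: m_assoc)
    then have "len (a \<otimes> s i) < len (b \<otimes> s i)"
      using cox_length_le[OF delete_at_in_lists[OF r(1)], of p] length_delete_at[OF pr] r pr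
      by simp
    then show ?thesis
      using bstep_mult_gen[OF st iI] by simp
  qed
qed

lemma bruhat_le_mult_descent:
  assumes "u \<preceq> x" "i \<in> D x" "i \<notin> D u"
  shows "u \<preceq> x \<otimes> s i"
proof -
  have steps: "bstep\<^sup>*\<^sup>* u x" and u: "u \<in> carrier G"
    using assms(1) bruhat_le_iff by auto
  from steps assms(2) show ?thesis
  proof (induction rule: rtranclp_induct)
    case base
    then show ?case using assms by simp
  next
    case (step y x)
    have yc: "y \<in> carrier G" and xc: "x \<in> carrier G" and iI: "i \<in> I"
      using step bstep_closed right_descent_iff by auto
    show ?case
    proof (cases "i \<in> D y")
      case True
      have "len (y \<otimes> s i) < len (x \<otimes> s i)"
        using cox_length_mult_descent[OF yc True] cox_length_mult_descent[OF xc step(4)] step(2)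
        by (simp add: bruhat_step_def)
      then show ?thesis
        using step(3)[OF True] bstep_mult_gen[OF step(2) iI] bruhat_le_if_bstep bruhat_le_trans
        by blast
    next
      case False
      have "u \<preceq> y"
        using step(1) u bruhat_le_iff by simp
      then show ?thesis
        using bstep_descent_lift[OF step(2) step(4) False] bruhat_le_mult_non_descent[OF yc iI False]
          bruhat_le_if_bstep bruhat_le_trans by auto
    qed
  qed
qed

lemma mult_descent_bruhat_le:
  assumes "u \<preceq> x" "i \<in> D x" "i \<notin> D u"
  shows "u \<otimes> s i \<preceq> x"
proof -
  have "bstep\<^sup>*\<^sup>* u x" and u: "u \<in> carrier G"
    using assms(1) bruhat_le_iff by auto
  have iI: "i \<in> I"
    using assms(2) by (simp add: right_descent_iff)
  from \<open>bstep\<^sup>*\<^sup>* u x\<close> u assms(3) show ?thesis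
  proof (induction rule: converse_rtranclp_induct)
    case base
    then show ?case using assms by simp
  next
    case (step u y)
    have yc: "y \<in> carrier G" and uc: "u \<in> carrier G"
      using step bstep_closed by auto
    have yx: "y \<preceq> x"
      using step(2) yc bruhat_le_iff by simp
    show ?case
    proof (cases "i \<in> D y")
      case False
      have "len (u \<otimes> s i) < len (y \<otimes> s i)"
        using cox_length_mult_non_descent[OF yc iI False] cox_length_mult_non_descent[OF uc iI step(5)]
          step(1) by (simp add: bruhat_step_def)
      then show ?thesis
        using step(3)[OF yc False] bstep_mult_gen[OF step(1) iI] bruhat_le_if_bstep bruhat_le_trans
        by blast
    next
      case True
      have "y \<otimes> s i \<preceq> y"
        using bruhat_le_mult_non_descent[of "y \<otimes> s i" i] yc iI True
        by (simp add: right_descent_iff)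
      from bstep_descent_lift[OF step(1) True step(5)] show ?thesis
      proof
        assume "u = y \<otimes> s i"
        then show ?thesis
          using yx yc iI by simp
      next
        assume "bstep (u \<otimes> s i) (y \<otimes> s i)"
        then show ?thesis
          using \<open>y \<otimes> s i \<preceq> y\<close> yx bruhat_le_if_bstep bruhat_le_trans by blast
      qed
    qed
  qed
qed

lemma bruhat_le_mult_gen_iff:
  assumes y: "y \<in> carrier G" and j: "j \<in> I" "j \<notin> D v"
  shows "v \<preceq> y \<longleftrightarrow> v \<preceq> y \<otimes> s j"
proof -
  have mult: "v \<preceq> x \<otimes> s j" if x: "x \<in> carrier G" "v \<preceq> x" for x
    using bruhat_le_mult_descent[OF x(2) _ j(2)] bruhat_le_mult_non_descent[OF x(1) j(1)]
      bruhat_le_trans[OF x(2)] by blast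
  show ?thesis
    using mult[of y] mult[of "y \<otimes> s j"] y j by auto
qed

lemma bruhat_le_mult_parabolic_iff:
  assumes z: "z \<in> parabolic G s J" and J: "J \<subseteq> I" "J \<inter> D v = {}" and y: "y \<in> carrier G"
  shows "v \<preceq> y \<longleftrightarrow> v \<preceq> y \<otimes> z"
proof -
  have gens: "s ` J \<subseteq> carrier G"
    using J by auto
  have gen: "v \<preceq> y \<longleftrightarrow> v \<preceq> y \<otimes> s j" if "y \<in> carrier G" "j \<in> J" for y j
    using that J by (intro bruhat_le_mult_gen_iff) auto
  from z have "\<forall>y\<in>carrier G. v \<preceq> y \<longleftrightarrow> v \<preceq> y \<otimes> z"
    unfolding parabolic_def
  proof (induction rule: generate.induct)
    case one
    then show ?case by simp
  next
    case (incl h)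
    then obtain j where j: "j \<in> J" "h = s j"
      by auto
    show ?case
      unfolding j(2) using gen[OF _ j(1)] by blast
  next
    case (inv h)
    then obtain j where j: "j \<in> J" "inv h = s j"
      using J by auto
    show ?case
      unfolding j(2) using gen[OF _ j(1)] by blast
  next
    case (eng h1 h2)
    then have h: "h1 \<in> carrier G" "h2 \<in> carrier G"
      using generate_in_carrier[OF gens] by auto
    show ?case
    proof
      fix y assume y: "y \<in> carrier G"
      have "v \<preceq> y \<longleftrightarrow> v \<preceq> y \<otimes> h1"
        using eng.IH(1) y by blast
      also have "\<dots> \<longleftrightarrow> v \<preceq> y \<otimes> h1 \<otimes> h2"
        using eng.IH(2) y h by blast
      also have "y \<otimes> h1 \<otimes> h2 = y \<otimes> (h1 \<otimes> h2)"
        using y h by (simp add: m_assoc)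
      finally show "v \<preceq> y \<longleftrightarrow> v \<preceq> y \<otimes> (h1 \<otimes> h2)" .
    qed
  qed
  with y show ?thesis
    by blast
qed

subsection \<open>Cosets of parabolic subgroups\<close>

lemma subgroup_parabolic: "J \<subseteq> I \<Longrightarrow> subgroup (parabolic G s J) G"
  unfolding parabolic_def by (rule generate_is_subgroup) auto

lemma exists_parabolic_mult_no_descent:
  assumes J: "J \<subseteq> I" and y: "y \<in> carrier G"
  obtains z where "z \<in> parabolic G s J" "D (y \<otimes> z) \<inter> J = {}"
proof -
  interpret W: subgroup "parabolic G s J" G
    using J by (rule subgroup_parabolic)
  obtain z where z: "z \<in> parabolic G s J"
    and min: "\<And>z'. z' \<in> parabolic G s J \<Longrightarrow> len (y \<otimes> z) \<le> len (y \<otimes> z')"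
    using ex_has_least_nat[of "\<lambda>z. z \<in> parabolic G s J" \<one> "\<lambda>z. len (y \<otimes> z)"] W.one_closed
    by blast
  have "i \<notin> D (y \<otimes> z)" if i: "i \<in> J" for i
  proof -
    have "s i \<in> parabolic G s J"
      using i unfolding parabolic_def by (auto intro: generate.incl)
    then have "len (y \<otimes> z) \<le> len (y \<otimes> z \<otimes> s i)"
      using min[of "z \<otimes> s i"] y z by (simp add: m_assoc)
    then show ?thesis
      by (simp add: right_descent_iff)
  qed
  with z that show ?thesis
    by blast
qed

lemma bruhat_le_mult_unique_descent:
  assumes wx: "w \<preceq> x" and w: "w \<noteq> \<one>" and k: "k \<notin> D w" and Dx: "D x \<subseteq> {k}"
  shows "w \<otimes> s k \<preceq> x"
proof -
  have "x \<in> carrier G"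
    using wx by (simp add: bruhat_le_def)
  moreover have "x \<noteq> \<one>"
    using wx w bruhat_le_one by blast
  ultimately have "k \<in> D x"
    using Dx right_descent_nonempty by blast
  then show ?thesis
    using mult_descent_bruhat_le[OF wx _ k] by simp
qed

theorem annex_mult_gen:
  assumes w: "w \<in> carrier G" "w \<noteq> \<one>" and k: "k \<in> I" "k \<notin> D w"
    and Dv: "D (w \<otimes> s k) = {k}"
  shows "annex G I s (w \<otimes> s k)
           = {x \<otimes> z | x z. x \<in> annex G I s w \<and> z \<in> parabolic G s (I - {k})}"
    (is "annex G I s ?v = ?R")
proof -
  let ?W = "parabolic G s (I - {k})"
  interpret W: subgroup ?W G
    by (rule subgroup_parabolic) auto
  have coset: "?v \<preceq> y \<longleftrightarrow> ?v \<preceq> y \<otimes> z" if "y \<in> carrier G" "z \<in> ?W" for y z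
    using bruhat_le_mult_parabolic_iff[of z "I - {k}" ?v y] that Dv by auto
  have wv: "w \<preceq> ?v"
    using bruhat_le_mult_non_descent[OF w(1) k] .
  show ?thesis
  proof (intro equalityI subsetI)
    fix y assume "y \<in> annex G I s ?v"
    then have y: "y \<in> carrier G" "\<not> ?v \<preceq> y"
      by (auto simp: annex_def)
    obtain z where z: "z \<in> ?W" and "D (y \<otimes> z) \<inter> (I - {k}) = {}"
      using exists_parabolic_mult_no_descent[of "I - {k}" y] y by auto
    then have "D (y \<otimes> z) \<subseteq> {k}"
      by (auto simp: right_descent_def)
    then have "\<not> w \<preceq> y \<otimes> z"
      using bruhat_le_mult_unique_descent[OF _ w(2) k(2)] coset[OF y(1) z] y(2) by blast
    moreover have "y = (y \<otimes> z) \<otimes> inv z"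
      using y z by (simp add: m_assoc)
    ultimately show "y \<in> ?R"
      using y z unfolding annex_def by fastforce
  next
    fix y assume "y \<in> ?R"
    then obtain x z where y: "y = x \<otimes> z" and x: "x \<in> carrier G" "\<not> w \<preceq> x" and z: "z \<in> ?W"
      unfolding annex_def by blast
    then have "\<not> ?v \<preceq> y"
      using coset[OF x(1) z] wv bruhat_le_trans by blast
    then show "y \<in> annex G I s ?v"
      using x z y unfolding annex_def by auto
  qed
qed

end

theorem proposition3p14:
  fixes G :: "('a, 'b) monoid_scheme" and I :: "'i set" and s :: "'i \<Rightarrow> 'a"
    and w :: 'a and k :: 'i
  assumes "coxeter_system G I s"
    and "w \<in> carrier G" and "w \<noteq> \<one>\<^bsub>G\<^esub>"
    and "k \<in> I" and "k \<notin> right_descent G I s w"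
    and "right_descent G I s (w \<otimes>\<^bsub>G\<^esub> s k) = {k}"
  shows "annex G I s (w \<otimes>\<^bsub>G\<^esub> s k)
           = {x \<otimes>\<^bsub>G\<^esub> y | x y. x \<in> annex G I s w \<and> y \<in> parabolic G s (I - {k})}"
proof -
  interpret coxeter G I s
    using assms(1) unfolding coxeter_def coxeter_axioms_def coxeter_system_def by blast
  show ?thesis
    using annex_mult_gen assms(2-6) by blast
qed

end
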